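(* In the setting described in the context, if $g_m\in\widetilde{I}$ then $m\in S$.
   Context: $\Phi$ is a commutative ring with unity $1\ne0$, regarded as a differential ring with the commuting derivations $\delta_1,\delta_2$ acting as zero. $S\subseteq\mathbb{N}$ is recursively enumerable and $M$ is a two-tape acyclic Minsky machine with states $q_0,\ldots,q_n$ ($q_0$ terminal) such that for every $x\in\mathbb{N}$, starting at configuration $[1,2^{2^x},0]$, $M$ reaches $[0,1,0]$ in finitely many steps if $x\in S$ and operates infinitely if $x\notin S$. Minsky machine conventions: two tapes infinite to the right with cells $0,1,2,\ldots$; cell $0$ contains $1$, all others $0$; a configuration $[i,a,b]$ means state $q_i$, head at cell $a$ of tape 1 and cell $b$ of tape 2. Commands are $q_i\varepsilon\sigma\to q_jT_\alpha T_\beta$ with $1\le i\le n$, $0\le j\le n$, $\varepsilon,\sigma\in\{0,1\}$, $\alpha,\beta\in\{-1,0,1\}$, $\alpha\ge0$ if $\varepsilon=1$, $\beta\ge0$ if $\sigma=1$, at most one per triple $(i,\varepsilon,\sigma)$; such a command applies to $[i,a,b]$ when ($\varepsilon=1$ iff $a=0$) and ($\sigma=1$ iff $b=0$), producing $[j,a+\alpha,b+\beta]$. Acyclic means no configuration recurs after a positive number of steps. $A=\Phi\{x_1,x_2,q_0,\ldots,q_n\}$ is the differential polynomial ring w.r.t. $\delta_1,\delta_2$ (polynomial ring in independent variables $\delta_1^a\delta_2^b(y)$, $y\in\{x_1,x_2,q_0,\ldots,q_n\}$, $\delta_1,\delta_2$ raising the corresponding exponent). $J$ is the differential ideal generated by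 $\delta_1(x_2),\delta_2(x_1)$, and $B=A/J$. For each command of $M$, $g(i,\varepsilon,\sigma)$ is the image in $B$ of $x_1^{\varepsilon}x_2^{\sigma}\delta_1^{1-\varepsilon}\delta_2^{1-\sigma}(q_i)-x_1^{\varepsilon}x_2^{\sigma}\delta_1^{1-\varepsilon+\alpha}\delta_2^{1-\sigma+\beta}(q_j)$; $\widetilde{I}$ is the differential ideal of $B$ generated by all $g(i,\varepsilon,\sigma)$; and $g_m$ is the image in $B$ of $x_1x_2\delta_1^{2^{2^m}}(q_1)-x_1x_2\delta_1(q_0)$. *)

theory Defs
  imports "HOL-Library.Poly_Mapping" "HOL-Algebra.QuotRing"
begin

text \<open>A command q_i eps sigma -> q_j T_alpha T_beta is stored as
  cmd i eps sigma = Some (j, alpha, beta); eps = True means the tape-1 symbol read is 1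
  (i.e. head at cell 0), likewise sigma for tape 2.  Configurations are triples (i, a, b).\<close>

type_synonym minsky = "nat \<Rightarrow> bool \<Rightarrow> bool \<Rightarrow> (nat \<times> int \<times> int) option"

definition minsky_wf :: "nat \<Rightarrow> minsky \<Rightarrow> bool" where
  "minsky_wf n cmd \<longleftrightarrow>
     (\<forall>i e s j \<alpha> \<beta>. cmd i e s = Some (j, \<alpha>, \<beta>) \<longrightarrow>
        1 \<le> i \<and> i \<le> n \<and> j \<le> n \<and> \<alpha> \<in> {-1, 0, 1} \<and> \<beta> \<in> {-1, 0, 1} \<and>
        (e \<longrightarrow> \<alpha> \<ge> 0) \<and> (s \<longrightarrow> \<beta> \<ge> 0))"

definition minsky_step :: "minsky \<Rightarrow> nat \<times> nat \<times> nat \<Rightarrow> nat \<times> nat \<times> nat \<Rightarrow> bool" where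
  "minsky_step cmd c c' \<longleftrightarrow>
     (case c of (i, a, b) \<Rightarrow>
        (\<exists>j \<alpha> \<beta>. cmd i (a = 0) (b = 0) = Some (j, \<alpha>, \<beta>) \<and>
           c' = (j, nat (int a + \<alpha>), nat (int b + \<beta>))))"

definition minsky_acyclic :: "minsky \<Rightarrow> bool" where
  "minsky_acyclic cmd \<longleftrightarrow> (\<forall>c. \<not> (minsky_step cmd)\<^sup>+\<^sup>+ c c)"

definition minsky_runs_forever :: "minsky \<Rightarrow> nat \<times> nat \<times> nat \<Rightarrow> bool" where
  "minsky_runs_forever cmd c \<longleftrightarrow>
     (\<forall>c'. (minsky_step cmd)\<^sup>*\<^sup>* c c' \<longrightarrow> (\<exists>c''. minsky_step cmd c' c''))"

datatype dbase = X1 | X2 | Q nat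

text \<open>DV y a b stands for delta_1^a delta_2^b (y).\<close>
datatype dvar = DV dbase nat nat

type_synonym 'a dpoly = "(dvar \<Rightarrow>\<^sub>0 nat) \<Rightarrow>\<^sub>0 'a"

definition shift1 :: "dvar \<Rightarrow> dvar" where "shift1 v = (case v of DV y a b \<Rightarrow> DV y (Suc a) b)"
definition shift2 :: "dvar \<Rightarrow> dvar" where "shift2 v = (case v of DV y a b \<Rightarrow> DV y a (Suc b))"

definition var :: "dvar \<Rightarrow> 'a::comm_ring_1 dpoly" where
  "var v = Poly_Mapping.single (Poly_Mapping.single v 1) 1"

text \<open>The derivation of the polynomial ring extending the map on variables given by sh
  (zero on coefficients, Leibniz rule on monomials).\<close>
definition dderiv :: "(dvar \<Rightarrow> dvar) \<Rightarrow> 'a::comm_ring_1 dpoly \<Rightarrow> 'a dpoly" where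
  "dderiv sh p = (\<Sum>m\<in>Poly_Mapping.keys p. \<Sum>v\<in>Poly_Mapping.keys (m :: dvar \<Rightarrow>\<^sub>0 nat).
      Poly_Mapping.single (m - Poly_Mapping.single v 1 + Poly_Mapping.single (sh v) 1)
        (of_nat (Poly_Mapping.lookup m v) * Poly_Mapping.lookup p m))"

definition delta1 :: "'a::comm_ring_1 dpoly \<Rightarrow> 'a dpoly" where "delta1 = dderiv shift1"
definition delta2 :: "'a::comm_ring_1 dpoly \<Rightarrow> 'a dpoly" where "delta2 = dderiv shift2"

definition allowed_base :: "nat \<Rightarrow> dbase set" where
  "allowed_base n = {X1, X2} \<union> Q ` {..n}"

definition dvars :: "'a::zero dpoly \<Rightarrow> dvar set" where
  "dvars p = (\<Union>m\<in>Poly_Mapping.keys p. Poly_Mapping.keys (m :: dvar \<Rightarrow>\<^sub>0 nat))"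

definition ringA :: "nat \<Rightarrow> 'a::comm_ring_1 dpoly ring" where
  "ringA n = \<lparr>carrier = {p. \<forall>v\<in>dvars p. \<exists>y a b. v = DV y a b \<and> y \<in> allowed_base n},
              mult = (*), one = 1, zero = 0, add = (+)\<rparr>"

definition diff_ideal_gen ::
  "('b, 'c) ring_scheme \<Rightarrow> ('b \<Rightarrow> 'b) \<Rightarrow> ('b \<Rightarrow> 'b) \<Rightarrow> 'b set \<Rightarrow> 'b set" where
  "diff_ideal_gen R d1 d2 G =
     \<Inter>{I. ideal I R \<and> G \<subseteq> I \<and> (\<forall>x\<in>I. d1 x \<in> I \<and> d2 x \<in> I)}"

definition idealJ :: "nat \<Rightarrow> 'a::comm_ring_1 dpoly set" where
  "idealJ n = diff_ideal_gen (ringA n) delta1 delta2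
      {delta1 (var (DV X2 0 0)), delta2 (var (DV X1 0 0))}"

definition ringB :: "nat \<Rightarrow> 'a::comm_ring_1 dpoly set ring" where
  "ringB n = ringA n Quot idealJ n"

definition projB :: "nat \<Rightarrow> 'a::comm_ring_1 dpoly \<Rightarrow> 'a dpoly set" where
  "projB n p = idealJ n +>\<^bsub>ringA n\<^esub> p"

definition derivB :: "nat \<Rightarrow> ('a::comm_ring_1 dpoly \<Rightarrow> 'a dpoly) \<Rightarrow> 'a dpoly set \<Rightarrow> 'a dpoly set" where
  "derivB n d C = projB n (d (SOME f. f \<in> C))"

definition gen_lift :: "nat \<Rightarrow> bool \<Rightarrow> bool \<Rightarrow> nat \<Rightarrow> int \<Rightarrow> int \<Rightarrow> 'a::comm_ring_1 dpoly" where
  "gen_lift i e s j \<alpha> \<beta> =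
     var (DV X1 0 0) ^ (if e then 1 else 0) * var (DV X2 0 0) ^ (if s then 1 else 0) *
       var (DV (Q i) (if e then 0 else 1) (if s then 0 else 1))
   - var (DV X1 0 0) ^ (if e then 1 else 0) * var (DV X2 0 0) ^ (if s then 1 else 0) *
       var (DV (Q j) (nat ((if e then 0 else 1) + \<alpha>)) (nat ((if s then 0 else 1) + \<beta>)))"

definition Itilde :: "nat \<Rightarrow> minsky \<Rightarrow> 'a::comm_ring_1 dpoly set set" where
  "Itilde n cmd = diff_ideal_gen (ringB n) (derivB n delta1) (derivB n delta2)
      {projB n (gen_lift i e s j \<alpha> \<beta>) | i e s j \<alpha> \<beta>. cmd i e s = Some (j, \<alpha>, \<beta>)}"

definition g_elem :: "nat \<Rightarrow> nat \<Rightarrow> 'a::comm_ring_1 dpoly set" where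
  "g_elem n m = projB n (var (DV X1 0 0) * var (DV X2 0 0) * var (DV (Q 1) (2 ^ 2 ^ m) 0)
                        - var (DV X1 0 0) * var (DV X2 0 0) * var (DV (Q 0) 1 0))"

end

theory Submission
  imports Defs "HOL-Library.Confluence"
begin

text \<open>Suppose \<open>m \<notin> S\<close>. Since \<open>M\<close> is deterministic and runs forever from \<open>c\<^sub>0 = [1, 2^2^m, 0]\<close>,
  the configurations \<open>c\<^sub>0\<close> and \<open>[0, 1, 0]\<close> lie in different classes \<open>C\<close> of the equivalence generated
  by the step relation. Give the monomial \<open>\<delta>\<^sub>1\<^sup>k x\<^sub>1 \<cdot> \<delta>\<^sub>2\<^sup>l x\<^sub>2 \<cdot> \<delta>\<^sub>1\<^sup>a \<delta>\<^sub>2\<^sup>b q\<^sub>i\<close> the weight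
  \<open>(-1)\<^sup>k\<^sup>+\<^sup>l\<close> if \<open>[i, a + k, b + l] \<in> C\<close>, and every other monomial weight \<open>0\<close>, and let \<open>L\<close> be
  the induced linear functional. Differentiating such a monomial moves one derivative between
  \<open>x\<^sub>1\<close> (or \<open>x\<^sub>2\<close>) and \<open>q\<^sub>i\<close>: the configuration stays, the sign flips, so \<open>L\<close> vanishes on every
  derivative. A command of \<open>M\<close> relates two configurations of the same class, so \<open>L\<close> vanishes on
  all multiples of the generators \<open>g(i,\<epsilon>,\<sigma>)\<close>, and trivially on multiples of \<open>\<delta>\<^sub>1 x\<^sub>2\<close> and \<open>\<delta>\<^sub>2 x\<^sub>1\<close>.
  Hence \<open>{p. \<forall>r. L (r p) = 0}\<close> is a differential ideal of \<open>A\<close> containing \<open>J\<close> and a lift of every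
  element of \<open>\<tilde>I\<close>; but \<open>L (g\<^sub>m) = 1\<close>.\<close>

section \<open>The derivations\<close>

lemma poly_mapping_eq_sum_single:
  "(p :: 'b \<Rightarrow>\<^sub>0 'a::comm_monoid_add) =
     (\<Sum>m\<in>Poly_Mapping.keys p. Poly_Mapping.single m (Poly_Mapping.lookup p m))"
proof (rule poly_mapping_eqI)
  fix k
  show "Poly_Mapping.lookup p k =
      Poly_Mapping.lookup (\<Sum>m\<in>Poly_Mapping.keys p. Poly_Mapping.single m (Poly_Mapping.lookup p m)) k"
    by (cases "k \<in> Poly_Mapping.keys p")
       (simp_all add: lookup_sum lookup_single when_def in_keys_iff)
qed

lemma keys_add_nat:
  "Poly_Mapping.keys ((a :: 'b \<Rightarrow>\<^sub>0 nat) + b) = Poly_Mapping.keys a \<union> Poly_Mapping.keys b"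
  by (auto simp: in_keys_iff lookup_add)

definition dderiv_monom :: "(dvar \<Rightarrow> dvar) \<Rightarrow> (dvar \<Rightarrow>\<^sub>0 nat) \<Rightarrow> 'a::comm_ring_1 \<Rightarrow> 'a dpoly" where
  "dderiv_monom sh m c = (\<Sum>v\<in>Poly_Mapping.keys m.
      Poly_Mapping.single (m - Poly_Mapping.single v 1 + Poly_Mapping.single (sh v) 1)
        (of_nat (Poly_Mapping.lookup m v) * c))"

lemma dderiv_monom_0 [simp]: "dderiv_monom sh m 0 = 0"
  by (simp add: dderiv_monom_def)

lemma dderiv_monom_add: "dderiv_monom sh m (a + b) = dderiv_monom sh m a + dderiv_monom sh m b"
  by (simp add: dderiv_monom_def distrib_left single_add sum.distrib)

lemma dderiv_eq_sum_monom:
  "dderiv sh p = (\<Sum>m\<in>Poly_Mapping.keys p. dderiv_monom sh m (Poly_Mapping.lookup p m))"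
  by (simp add: dderiv_def dderiv_monom_def)

lemma dderiv_0 [simp]: "dderiv sh 0 = 0"
  by (simp add: dderiv_def)

lemma dderiv_add: "dderiv sh (p + q) = dderiv sh p + dderiv sh q"
  unfolding dderiv_eq_sum_monom
  by (rule setsum_keys_plus_distrib) (simp_all add: dderiv_monom_add)

lemma dderiv_single: "dderiv sh (Poly_Mapping.single m c) = dderiv_monom sh m c"
  by (cases "c = 0") (simp_all add: dderiv_eq_sum_monom)

lemma dderiv_sum: "dderiv sh (sum f A) = (\<Sum>x\<in>A. dderiv sh (f x))"
  by (induction A rule: infinite_finite_induct) (simp_all add: dderiv_add)

lemma dderiv_monom_mult_single:
  fixes a :: "dvar \<Rightarrow>\<^sub>0 nat"
  assumes "finite K" "Poly_Mapping.keys a \<subseteq> K" and e: "e = (c * d :: 'a::comm_ring_1)"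
  shows "(\<Sum>v\<in>K. Poly_Mapping.single (a + b - Poly_Mapping.single v 1 + Poly_Mapping.single (sh v) 1)
        (of_nat (Poly_Mapping.lookup a v) * e)) = dderiv_monom sh a c * Poly_Mapping.single b d"
proof -
  have "(\<Sum>v\<in>K. Poly_Mapping.single (a + b - Poly_Mapping.single v 1 + Poly_Mapping.single (sh v) 1)
        (of_nat (Poly_Mapping.lookup a v) * e)) =
     (\<Sum>v\<in>Poly_Mapping.keys a. Poly_Mapping.single (a + b - Poly_Mapping.single v 1 + Poly_Mapping.single (sh v) 1)
        (of_nat (Poly_Mapping.lookup a v) * e))"
    using assms by (intro sum.mono_neutral_right) (auto simp: in_keys_iff)
  also have "\<dots> = dderiv_monom sh a c * Poly_Mapping.single b d"
    unfolding dderiv_monom_def sum_distrib_right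
    by (intro sum.cong refl)
       (auto simp: mult_single e mult.assoc intro!: arg_cong2[where f=Poly_Mapping.single] poly_mapping_eqI
         simp: lookup_add lookup_minus lookup_single when_def in_keys_iff split: if_splits)
  finally show ?thesis .
qed

lemma dderiv_monom_add_monom:
  fixes a b :: "dvar \<Rightarrow>\<^sub>0 nat" and c d :: "'a::comm_ring_1"
  shows "dderiv_monom sh (a + b) (c * d) =
    dderiv_monom sh a c * Poly_Mapping.single b d + Poly_Mapping.single a c * dderiv_monom sh b d"
proof -
  let ?sh = "\<lambda>v. a + b - Poly_Mapping.single v 1 + Poly_Mapping.single (sh v) 1"
  have "dderiv_monom sh (a + b) (c * d) =
     (\<Sum>v\<in>Poly_Mapping.keys a \<union> Poly_Mapping.keys b.
        Poly_Mapping.single (?sh v) (of_nat (Poly_Mapping.lookup a v) * (c * d)) +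
        Poly_Mapping.single (?sh v) (of_nat (Poly_Mapping.lookup b v) * (c * d)))"
    unfolding dderiv_monom_def keys_add_nat
    by (intro sum.cong refl) (simp add: lookup_add distrib_right single_add)
  also have "\<dots> = dderiv_monom sh a c * Poly_Mapping.single b d + dderiv_monom sh b d * Poly_Mapping.single a c"
    unfolding sum.distrib
  proof (rule arg_cong2[where f = "(+)"])
    show "(\<Sum>v\<in>Poly_Mapping.keys a \<union> Poly_Mapping.keys b.
        Poly_Mapping.single (?sh v) (of_nat (Poly_Mapping.lookup a v) * (c * d))) =
      dderiv_monom sh a c * Poly_Mapping.single b d"
      by (rule dderiv_monom_mult_single) auto
    show "(\<Sum>v\<in>Poly_Mapping.keys a \<union> Poly_Mapping.keys b.
        Poly_Mapping.single (?sh v) (of_nat (Poly_Mapping.lookup b v) * (c * d))) =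
      dderiv_monom sh b d * Poly_Mapping.single a c"
      unfolding add.commute[of a b] by (rule dderiv_monom_mult_single) (auto simp: mult.commute)
  qed
  finally show ?thesis by (simp add: mult.commute)
qed

lemma dderiv_mult: "dderiv sh ((p :: 'a::comm_ring_1 dpoly) * q) = dderiv sh p * q + p * dderiv sh q"
proof -
  let ?P = "\<lambda>m. Poly_Mapping.single m (Poly_Mapping.lookup p m)"
  let ?Q = "\<lambda>m. Poly_Mapping.single m (Poly_Mapping.lookup q m)"
  have pq: "p * q = (\<Sum>m\<in>Poly_Mapping.keys p. \<Sum>m'\<in>Poly_Mapping.keys q. ?P m * ?Q m')"
    by (subst poly_mapping_eq_sum_single[of p], subst poly_mapping_eq_sum_single[of q])
       (simp add: sum_product)
  have "dderiv sh (p * q) = (\<Sum>m\<in>Poly_Mapping.keys p. \<Sum>m'\<in>Poly_Mapping.keys q.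
        dderiv sh (?P m) * ?Q m' + ?P m * dderiv sh (?Q m'))"
    unfolding pq dderiv_sum
    by (intro sum.cong refl) (simp add: mult_single dderiv_single dderiv_monom_add_monom)
  also have "\<dots> = (\<Sum>m\<in>Poly_Mapping.keys p. dderiv sh (?P m)) * (\<Sum>m\<in>Poly_Mapping.keys q. ?Q m)
     + (\<Sum>m\<in>Poly_Mapping.keys p. ?P m) * (\<Sum>m\<in>Poly_Mapping.keys q. dderiv sh (?Q m))"
    by (simp add: sum_product sum.distrib)
  also have "\<dots> = dderiv sh p * q + p * dderiv sh q"
    by (simp only: dderiv_sum[symmetric] poly_mapping_eq_sum_single[symmetric])
  finally show ?thesis .
qed

definition mvar :: "dvar \<Rightarrow> dvar \<Rightarrow>\<^sub>0 nat" where
  "mvar v = Poly_Mapping.single v 1"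

lemma lookup_mvar: "Poly_Mapping.lookup (mvar v) u = (if v = u then 1 else 0)"
  by (simp add: mvar_def lookup_single when_def)

lemma keys_mvar [simp]: "Poly_Mapping.keys (mvar v) = {v}"
  by (simp add: mvar_def)

lemma var_eq_single_mvar: "var v = Poly_Mapping.single (mvar v) 1"
  by (simp add: var_def mvar_def)

lemma dderiv_var: "dderiv sh (var v) = var (sh v)"
  by (simp add: var_eq_single_mvar dderiv_single dderiv_monom_def mvar_def)

lemma shift1_DV [simp]: "shift1 (DV y a b) = DV y (Suc a) b"
  by (simp add: shift1_def)

lemma shift2_DV [simp]: "shift2 (DV y a b) = DV y a (Suc b)"
  by (simp add: shift2_def)

section \<open>The ring \<open>A\<close>\<close>

fun base_of :: "dvar \<Rightarrow> dbase" where
  "base_of (DV y a b) = y"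

lemma base_of_shift [simp]: "base_of (shift1 v) = base_of v" "base_of (shift2 v) = base_of v"
  by (cases v; simp)+

lemma carrier_ringA_iff: "p \<in> carrier (ringA n) \<longleftrightarrow> (\<forall>v\<in>dvars p. base_of v \<in> allowed_base n)"
proof -
  have "(\<exists>y a b. v = DV y a b \<and> y \<in> allowed_base n) \<longleftrightarrow> base_of v \<in> allowed_base n" for v
    by (cases v) auto
  then show ?thesis by (simp add: ringA_def)
qed

lemma ringA_ops [simp]:
  "mult (ringA n) = (*)" "add (ringA n) = (+)" "zero (ringA n) = 0" "one (ringA n) = 1"
  by (simp_all add: ringA_def)

lemma dvars_add: "dvars (p + q) \<subseteq> dvars p \<union> dvars q"
  unfolding dvars_def using keys_add[of p q] by blast

lemma dvars_uminus: "dvars (- (p :: 'a::comm_ring_1 dpoly)) = dvars p"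
  unfolding dvars_def by simp

lemma dvars_mult: "dvars ((p :: 'a::comm_ring_1 dpoly) * q) \<subseteq> dvars p \<union> dvars q"
  unfolding dvars_def using keys_mult[of p q] by (force simp: keys_add_nat)

lemma dvars_0 [simp]: "dvars 0 = {}"
  by (simp add: dvars_def)

lemma dvars_1 [simp]: "dvars (1 :: 'a::comm_ring_1 dpoly) = {}"
  by (simp add: dvars_def)

lemma dvars_single: "dvars (Poly_Mapping.single m c) \<subseteq> Poly_Mapping.keys m"
  by (simp add: dvars_def)

lemma dvars_sum: "dvars (sum f A) \<subseteq> (\<Union>x\<in>A. dvars (f x))"
  unfolding dvars_def using keys_sum[of f A] by blast

lemma keys_replace_mvar:
  "v \<in> Poly_Mapping.keys m \<Longrightarrow> Poly_Mapping.keys (m - mvar v + mvar u) \<subseteq> Poly_Mapping.keys m \<union> {u}"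
  by (auto simp: in_keys_iff lookup_add lookup_minus lookup_mvar split: if_splits)

lemma dvars_dderiv: "dvars (dderiv sh (p :: 'a::comm_ring_1 dpoly)) \<subseteq> dvars p \<union> sh ` dvars p"
proof -
  have "dvars (dderiv sh p) \<subseteq> (\<Union>m\<in>Poly_Mapping.keys p. \<Union>v\<in>Poly_Mapping.keys m.
      dvars (Poly_Mapping.single (m - mvar v + mvar (sh v))
        (of_nat (Poly_Mapping.lookup m v) * Poly_Mapping.lookup p m)))"
    unfolding dderiv_def mvar_def
    by (rule order_trans[OF dvars_sum]) (intro UN_mono order_refl dvars_sum)
  also have "\<dots> \<subseteq> dvars p \<union> sh ` dvars p"
    using dvars_single keys_replace_mvar unfolding dvars_def by fastforce
  finally show ?thesis .
qed

lemma carrier_ringA_add: "p \<in> carrier (ringA n) \<Longrightarrow> q \<in> carrier (ringA n) \<Longrightarrow> p + q \<in> carrier (ringA n)"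
  unfolding carrier_ringA_iff using dvars_add by blast

lemma carrier_ringA_mult: "p \<in> carrier (ringA n) \<Longrightarrow> q \<in> carrier (ringA n) \<Longrightarrow> p * q \<in> carrier (ringA n)"
  unfolding carrier_ringA_iff using dvars_mult by blast

lemma carrier_ringA_uminus: "p \<in> carrier (ringA n) \<Longrightarrow> - p \<in> carrier (ringA n)"
  unfolding carrier_ringA_iff using dvars_uminus by blast

lemma carrier_ringA_diff: "p \<in> carrier (ringA n) \<Longrightarrow> q \<in> carrier (ringA n) \<Longrightarrow> p - q \<in> carrier (ringA n)"
  by (metis carrier_ringA_add carrier_ringA_uminus diff_conv_add_uminus)

lemma carrier_ringA_0: "0 \<in> carrier (ringA n)"
  unfolding carrier_ringA_iff by simp

lemma carrier_ringA_1: "1 \<in> carrier (ringA n)"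
  unfolding carrier_ringA_iff by simp

lemma carrier_ringA_single:
  "(\<And>v. v \<in> Poly_Mapping.keys m \<Longrightarrow> base_of v \<in> allowed_base n) \<Longrightarrow>
    Poly_Mapping.single m c \<in> carrier (ringA n)"
  unfolding carrier_ringA_iff using dvars_single by blast

lemma carrier_ringA_var: "base_of v \<in> allowed_base n \<Longrightarrow> var v \<in> carrier (ringA n)"
  unfolding var_eq_single_mvar by (rule carrier_ringA_single) simp

lemma carrier_ringA_dderiv:
  assumes "\<And>v. base_of (sh v) = base_of v" "p \<in> carrier (ringA n)"
  shows "dderiv sh p \<in> carrier (ringA n)"
proof -
  have "\<forall>v\<in>dvars p \<union> sh ` dvars p. base_of v \<in> allowed_base n"
    using assms by (auto simp: carrier_ringA_iff)
  then show ?thesis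
    using dvars_dderiv[of sh p] unfolding carrier_ringA_iff by blast
qed

lemma cring_ringA: "cring (ringA n :: 'a::comm_ring_1 dpoly ring)"
proof (rule cringI)
  show "abelian_group (ringA n :: 'a dpoly ring)"
    by (rule abelian_groupI)
       (auto simp: carrier_ringA_add carrier_ringA_0 intro!: bexI[of _ "- _"] carrier_ringA_uminus)
  show "comm_monoid (ringA n :: 'a dpoly ring)"
    by (rule comm_monoidI) (auto simp: carrier_ringA_mult carrier_ringA_1 mult.assoc mult.commute)
qed (simp add: distrib_right)

lemma a_inv_ringA:
  assumes "(p :: 'a::comm_ring_1 dpoly) \<in> carrier (ringA n)"
  shows "a_inv (ringA n) p = - p"
proof -
  interpret cring "ringA n :: 'a dpoly ring" by (rule cring_ringA)
  show ?thesis by (rule minus_equality) (simp_all add: assms carrier_ringA_uminus)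
qed

section \<open>Differential ideals\<close>

definition is_diff_ideal :: "('b, 'c) ring_scheme \<Rightarrow> ('b \<Rightarrow> 'b) \<Rightarrow> ('b \<Rightarrow> 'b) \<Rightarrow> 'b set \<Rightarrow> bool" where
  "is_diff_ideal R d1 d2 I \<longleftrightarrow> ideal I R \<and> (\<forall>x\<in>I. d1 x \<in> I \<and> d2 x \<in> I)"

lemma diff_ideal_gen_subset:
  "is_diff_ideal R d1 d2 I \<Longrightarrow> G \<subseteq> I \<Longrightarrow> diff_ideal_gen R d1 d2 G \<subseteq> I"
  unfolding diff_ideal_gen_def is_diff_ideal_def by blast

lemma ideal_diff_ideal_gen:
  assumes "ring R" "is_diff_ideal R d1 d2 (carrier R)" "G \<subseteq> carrier R"
  shows "ideal (diff_ideal_gen R d1 d2 G) R"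
  unfolding diff_ideal_gen_def
  by (rule ring.i_Intersect[OF assms(1)]) (use assms in \<open>auto simp: is_diff_ideal_def\<close>)

lemma (in ring) mem_of_rcos_mem_quot_image:
  assumes J: "ideal J R" and I: "ideal I R" and "J \<subseteq> I" "p \<in> carrier R"
    and "J +> p \<in> (+>) J ` I"
  shows "p \<in> I"
proof -
  interpret J: ideal J R by (rule J)
  interpret I: ideal I R by (rule I)
  obtain q where q: "q \<in> I" "J +> p = J +> q"
    using assms(5) by blast
  have "p \<in> J +> q"
    using J.a_rcos_self[OF \<open>p \<in> carrier R\<close>] q(2) by simp
  then obtain j where "j \<in> J" "p = j \<oplus> q"
    unfolding a_r_coset_def' by blast
  then show ?thesis
    using \<open>J \<subseteq> I\<close> q(1) I.a_closed by blast
qed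

lemma is_diff_ideal_carrier_ringA: "is_diff_ideal (ringA n) delta1 delta2 (carrier (ringA n))"
  unfolding is_diff_ideal_def delta1_def delta2_def
  using cring.axioms(1)[OF cring_ringA] ring.oneideal carrier_ringA_dderiv base_of_shift by blast

lemma ideal_idealJ: "ideal (idealJ n :: 'a::comm_ring_1 dpoly set) (ringA n)"
  unfolding idealJ_def
  by (rule ideal_diff_ideal_gen[OF cring.axioms(1)[OF cring_ringA] is_diff_ideal_carrier_ringA])
     (auto simp: delta1_def delta2_def dderiv_var allowed_base_def intro!: carrier_ringA_var)

lemma derivB_mem_quot_image:
  fixes I :: "'a::comm_ring_1 dpoly set"
  assumes I: "ideal I (ringA n)" and J_sub: "idealJ n \<subseteq> I" and dI: "\<And>x. x \<in> I \<Longrightarrow> d x \<in> I"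
    and C: "C \<in> (+>\<^bsub>ringA n\<^esub>) (idealJ n) ` I"
  shows "derivB n d C \<in> (+>\<^bsub>ringA n\<^esub>) (idealJ n) ` I"
proof -
  interpret J: ideal "idealJ n :: 'a dpoly set" "ringA n" by (rule ideal_idealJ)
  interpret I: ideal I "ringA n" by (rule I)
  obtain q where q: "q \<in> I" "C = idealJ n +>\<^bsub>ringA n\<^esub> q"
    using C by blast
  have "q \<in> carrier (ringA n)"
    using q(1) I.a_subset by blast
  then have "q \<in> C"
    unfolding q(2) by (rule J.a_rcos_self)
  then have "(SOME f. f \<in> C) \<in> idealJ n +>\<^bsub>ringA n\<^esub> q"
    unfolding q(2)[symmetric] by (rule someI)
  then obtain j where "j \<in> idealJ n" "(SOME f. f \<in> C) = j \<oplus>\<^bsub>ringA n\<^esub> q"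
    unfolding a_r_coset_def' by blast
  then have "(SOME f. f \<in> C) \<in> I"
    using J_sub q(1) I.a_closed by auto
  then show ?thesis
    unfolding derivB_def projB_def using dI by blast
qed

lemma mem_of_projB_mem_Itilde:
  fixes I :: "'a::comm_ring_1 dpoly set"
  assumes I: "is_diff_ideal (ringA n) delta1 delta2 I"
    and J_gens: "delta1 (var (DV X2 0 0)) \<in> I" "delta2 (var (DV X1 0 0)) \<in> I"
    and gens: "\<And>i e s j \<alpha> \<beta>. cmd i e s = Some (j, \<alpha>, \<beta>) \<Longrightarrow> gen_lift i e s j \<alpha> \<beta> \<in> I"
    and p: "p \<in> carrier (ringA n)" "projB n p \<in> Itilde n cmd"
  shows "p \<in> I"
proof -
  interpret A: cring "ringA n :: 'a dpoly ring" by (rule cring_ringA)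
  define T where "T = (+>\<^bsub>ringA n\<^esub>) (idealJ n) ` I"
  have I_ideal: "ideal I (ringA n)" and I_d: "\<And>x. x \<in> I \<Longrightarrow> delta1 x \<in> I \<and> delta2 x \<in> I"
    using I by (simp_all add: is_diff_ideal_def)
  have J_sub: "idealJ n \<subseteq> I"
    unfolding idealJ_def by (rule diff_ideal_gen_subset[OF I]) (use J_gens in simp)
  have "is_diff_ideal (ringB n) (derivB n delta1) (derivB n delta2) T"
    unfolding is_diff_ideal_def
  proof (intro conjI ballI)
    show "ideal T (ringB n)"
      unfolding T_def ringB_def by (rule A.ring_ideal_imp_quot_ideal[OF ideal_idealJ I_ideal])
  qed (use I_d in \<open>auto simp: T_def intro: derivB_mem_quot_image[OF I_ideal J_sub]\<close>)
  moreover have "{projB n (gen_lift i e s j \<alpha> \<beta>) | i e s j \<alpha> \<beta>. cmd i e s = Some (j, \<alpha>, \<beta>)} \<subseteq> T"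
    unfolding projB_def T_def using gens by blast
  ultimately have "Itilde n cmd \<subseteq> T"
    unfolding Itilde_def by (rule diff_ideal_gen_subset)
  with p show ?thesis
    using A.mem_of_rcos_mem_quot_image[OF ideal_idealJ I_ideal J_sub] unfolding projB_def T_def by blast
qed

section \<open>Runs of the machine\<close>

lemma minsky_step_deterministic: "minsky_step cmd c c' \<Longrightarrow> minsky_step cmd c c'' \<Longrightarrow> c' = c''"
  unfolding minsky_step_def by (cases c) auto

lemma semiconfluentp_minsky_step: "semiconfluentp (minsky_step cmd)"
proof -
  have "strong_confluentp (minsky_step cmd)"
    by (rule strong_confluentpI) (auto dest: minsky_step_deterministic)
  then show ?thesis by (rule strong_confluentp_into_semiconfluentp)
qed

lemma minsky_step_from_terminal: "minsky_wf n cmd \<Longrightarrow> minsky_step cmd (0, a, b) c \<Longrightarrow> False"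
  unfolding minsky_step_def minsky_wf_def by fastforce

lemma not_equivclp_terminal:
  assumes wf: "minsky_wf n cmd" and forever: "minsky_runs_forever cmd c"
  shows "\<not> equivclp (minsky_step cmd) c (0, a, b)"
proof
  assume "equivclp (minsky_step cmd) c (0, a, b)"
  then obtain z where reach: "(minsky_step cmd)\<^sup>*\<^sup>* c z" and "(minsky_step cmd)\<^sup>*\<^sup>* (0, a, b) z"
    unfolding semiconfluentp_equivclp[OF semiconfluentp_minsky_step] rtranclp_conversep by blast
  from this(2) have "z = (0, a, b)"
    by (cases rule: converse_rtranclpE) (auto dest: minsky_step_from_terminal[OF wf])
  then show False
    using forever reach minsky_step_from_terminal[OF wf] unfolding minsky_runs_forever_def by metis
qed

section \<open>A linear functional vanishing on derivatives and generators\<close>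

definition xxq_monom :: "nat \<Rightarrow> nat \<Rightarrow> nat \<Rightarrow> nat \<Rightarrow> nat \<Rightarrow> dvar \<Rightarrow>\<^sub>0 nat" where
  "xxq_monom k l a b i = mvar (DV X1 k 0) + mvar (DV X2 0 l) + mvar (DV (Q i) a b)"

lemma lookup_xxq_monom: "Poly_Mapping.lookup (xxq_monom k l a b i) u =
   (if DV X1 k 0 = u then 1 else 0) + (if DV X2 0 l = u then 1 else 0) + (if DV (Q i) a b = u then 1 else 0)"
  by (simp add: xxq_monom_def lookup_add lookup_mvar)

lemma keys_xxq_monom: "Poly_Mapping.keys (xxq_monom k l a b i) = {DV X1 k 0, DV X2 0 l, DV (Q i) a b}"
  by (auto simp: in_keys_iff lookup_xxq_monom split: if_splits)

lemma xxq_monom_inject: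
  assumes "xxq_monom k l a b i = xxq_monom k' l' a' b' i'"
  shows "k = k' \<and> l = l' \<and> a = a' \<and> b = b' \<and> i = i'"
proof -
  have "{DV X1 k 0, DV X2 0 l, DV (Q i) a b} \<subseteq> {DV X1 k' 0, DV X2 0 l', DV (Q i') a' b'}"
    using arg_cong[OF assms, of Poly_Mapping.keys] by (simp add: keys_xxq_monom)
  then show ?thesis by simp
qed

lemma sum_keys_xxq_monom:
  "(\<Sum>v\<in>Poly_Mapping.keys (xxq_monom k l a b i). f v) = f (DV X1 k 0) + f (DV X2 0 l) + f (DV (Q i) a b)"
  by (simp add: keys_xxq_monom add.assoc)

definition weight :: "(nat \<times> nat \<times> nat \<Rightarrow> bool) \<Rightarrow> (dvar \<Rightarrow>\<^sub>0 nat) \<Rightarrow> 'a::comm_ring_1" where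
  "weight C m = (if \<exists>k l a b i. m = xxq_monom k l a b i
      then THE x. \<exists>k l a b i. m = xxq_monom k l a b i \<and>
        x = (- 1) ^ (k + l) * (if C (i, a + k, b + l) then 1 else 0)
      else 0)"

lemma weight_xxq_monom:
  "weight C (xxq_monom k l a b i) = (- 1) ^ (k + l) * (if C (i, a + k, b + l) then 1 else 0)"
  unfolding weight_def
  by (subst if_P, blast, rule the_equality, blast) (metis xxq_monom_inject)

lemma weight_eq_0: "(\<And>k l a b i. m \<noteq> xxq_monom k l a b i) \<Longrightarrow> weight C m = 0"
  unfolding weight_def by auto

definition coeff_pairing :: "((dvar \<Rightarrow>\<^sub>0 nat) \<Rightarrow> 'a) \<Rightarrow> 'a::comm_ring_1 dpoly \<Rightarrow> 'a" where
  "coeff_pairing f p = (\<Sum>m\<in>Poly_Mapping.keys p. f m * Poly_Mapping.lookup p m)"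

lemma coeff_pairing_add: "coeff_pairing f (p + q) = coeff_pairing f p + coeff_pairing f q"
  unfolding coeff_pairing_def by (rule setsum_keys_plus_distrib) (simp_all add: distrib_left)

lemma coeff_pairing_0 [simp]: "coeff_pairing f 0 = 0"
  by (simp add: coeff_pairing_def)

lemma coeff_pairing_single: "coeff_pairing f (Poly_Mapping.single m c) = f m * c"
  by (simp add: coeff_pairing_def)

lemma coeff_pairing_sum: "coeff_pairing f (sum g A) = (\<Sum>x\<in>A. coeff_pairing f (g x))"
  by (induction A rule: infinite_finite_induct) (simp_all add: coeff_pairing_add)

lemma coeff_pairing_diff: "coeff_pairing f (p - q) = coeff_pairing f p - coeff_pairing f q"
  by (metis add_diff_cancel coeff_pairing_add diff_add_cancel)

lemma coeff_pairing_mult_single: "coeff_pairing f (r * Poly_Mapping.single m (1 :: 'a::comm_ring_1)) =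
   (\<Sum>x\<in>Poly_Mapping.keys r. f (x + m) * Poly_Mapping.lookup r x)"
  by (subst poly_mapping_eq_sum_single[of r])
     (simp add: sum_distrib_right mult_single coeff_pairing_sum coeff_pairing_single)

lemma coeff_pairing_dderiv: "coeff_pairing f (dderiv sh p) = (\<Sum>m\<in>Poly_Mapping.keys p.
     (\<Sum>v\<in>Poly_Mapping.keys m. f (m - mvar v + mvar (sh v)) * of_nat (Poly_Mapping.lookup m v)) *
       Poly_Mapping.lookup p m)"
  unfolding dderiv_def coeff_pairing_sum coeff_pairing_single sum_distrib_right mvar_def
  by (intro sum.cong refl) (simp add: mult.assoc)

lemma mvar_replace_inverse:
  assumes "m - mvar v + mvar u = M" "v \<in> Poly_Mapping.keys m" "u \<noteq> v"
  shows "m = M - mvar u + mvar v" "u \<in> Poly_Mapping.keys M"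
proof -
  have "Poly_Mapping.lookup M x = Poly_Mapping.lookup m x - (if v = x then 1 else 0) + (if u = x then 1 else 0)" for x
    using assms(1) by (auto simp: lookup_add lookup_minus lookup_mvar)
  then show "m = M - mvar u + mvar v" "u \<in> Poly_Mapping.keys M"
    using assms(2,3) by (auto intro!: poly_mapping_eqI simp: lookup_add lookup_minus lookup_mvar in_keys_iff)
qed

lemma xxq_monom_replace_X1: "xxq_monom k l a b i - mvar (DV X1 k 0) + mvar (DV X1 k' 0) = xxq_monom k' l a b i"
  by (rule poly_mapping_eqI) (auto simp: lookup_add lookup_minus lookup_mvar lookup_xxq_monom)

lemma xxq_monom_replace_X2: "xxq_monom k l a b i - mvar (DV X2 0 l) + mvar (DV X2 0 l') = xxq_monom k l' a b i"
  by (rule poly_mapping_eqI) (auto simp: lookup_add lookup_minus lookup_mvar lookup_xxq_monom)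

lemma xxq_monom_replace_Q:
  "xxq_monom k l a b i - mvar (DV (Q i) a b) + mvar (DV (Q i) a' b') = xxq_monom k l a' b' i"
  by (rule poly_mapping_eqI) (auto simp: lookup_add lookup_minus lookup_mvar lookup_xxq_monom)

lemma weight_xxq_monom_replace_X2:
  assumes "0 < a'"
  shows "weight C (xxq_monom k l a b i - mvar (DV X2 0 l) + mvar (DV X2 a' l)) = 0"
proof (rule weight_eq_0, rule notI)
  fix k' l' a'' b'' i'
  assume "xxq_monom k l a b i - mvar (DV X2 0 l) + mvar (DV X2 a' l) = xxq_monom k' l' a'' b'' i'"
  from arg_cong[OF this, of "\<lambda>M. Poly_Mapping.lookup M (DV X2 a' l)"] show False
    using assms by (auto simp: lookup_add lookup_minus lookup_mvar lookup_xxq_monom)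
qed

lemma weight_xxq_monom_replace_X1:
  assumes "0 < b'"
  shows "weight C (xxq_monom k l a b i - mvar (DV X1 k 0) + mvar (DV X1 k b')) = 0"
proof (rule weight_eq_0, rule notI)
  fix k' l' a'' b'' i'
  assume "xxq_monom k l a b i - mvar (DV X1 k 0) + mvar (DV X1 k b') = xxq_monom k' l' a'' b'' i'"
  from arg_cong[OF this, of "\<lambda>M. Poly_Mapping.lookup M (DV X1 k b')"] show False
    using assms by (auto simp: lookup_add lookup_minus lookup_mvar lookup_xxq_monom)
qed

text \<open>On a monomial \<open>xxq_monom k l a b i\<close>, \<open>\<delta>\<^sub>1\<close> acting on \<open>x\<^sub>1\<close> and on \<open>q\<^sub>i\<close> gives two terms of
  opposite weight, and \<open>\<delta>\<^sub>1 \<delta>\<^sub>2\<^sup>l x\<^sub>2\<close> makes a monomial of weight \<open>0\<close>; conversely, a monomial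
  outside the support of the weight differentiates only into monomials of weight \<open>0\<close>.\<close>
lemma sum_weight_dderiv_monom_shift1:
  "(\<Sum>v\<in>Poly_Mapping.keys m. weight C (m - mvar v + mvar (shift1 v)) * of_nat (Poly_Mapping.lookup m v)) =
    (0 :: 'a::comm_ring_1)"
proof (cases "\<exists>k l a b i. m = xxq_monom k l a b i")
  case True
  then obtain k l a b i where m: "m = xxq_monom k l a b i" by blast
  have "weight C (xxq_monom k l a b i - mvar (DV X2 0 l) + mvar (DV X2 (Suc 0) l)) = (0 :: 'a)"
    by (rule weight_xxq_monom_replace_X2) simp
  then show ?thesis
    unfolding m sum_keys_xxq_monom
    by (simp add: lookup_xxq_monom xxq_monom_replace_X1 xxq_monom_replace_Q weight_xxq_monom)
next
  case False
  have "weight C (m - mvar v + mvar (shift1 v)) = (0 :: 'a)" if v: "v \<in> Poly_Mapping.keys m" for v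
  proof (rule weight_eq_0, rule notI)
    fix k l a b i assume e: "m - mvar v + mvar (shift1 v) = xxq_monom k l a b i"
    obtain y a' b' where vv: "v = DV y a' b'" by (cases v) auto
    note inv = mvar_replace_inverse[OF e v, unfolded vv, simplified]
    from inv(2) consider "y = X1" "k = Suc a'" "b' = 0" | "y = Q i" "a = Suc a'" "b' = b"
      by (auto simp: keys_xxq_monom)
    then show False
      using inv(1) False by cases (simp_all add: xxq_monom_replace_X1 xxq_monom_replace_Q, blast+)
  qed
  then show ?thesis by simp
qed

lemma sum_weight_dderiv_monom_shift2:
  "(\<Sum>v\<in>Poly_Mapping.keys m. weight C (m - mvar v + mvar (shift2 v)) * of_nat (Poly_Mapping.lookup m v)) =
    (0 :: 'a::comm_ring_1)"
proof (cases "\<exists>k l a b i. m = xxq_monom k l a b i")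
  case True
  then obtain k l a b i where m: "m = xxq_monom k l a b i" by blast
  have "weight C (xxq_monom k l a b i - mvar (DV X1 k 0) + mvar (DV X1 k (Suc 0))) = (0 :: 'a)"
    by (rule weight_xxq_monom_replace_X1) simp
  then show ?thesis
    unfolding m sum_keys_xxq_monom
    by (simp add: lookup_xxq_monom xxq_monom_replace_X2 xxq_monom_replace_Q weight_xxq_monom)
next
  case False
  have "weight C (m - mvar v + mvar (shift2 v)) = (0 :: 'a)" if v: "v \<in> Poly_Mapping.keys m" for v
  proof (rule weight_eq_0, rule notI)
    fix k l a b i assume e: "m - mvar v + mvar (shift2 v) = xxq_monom k l a b i"
    obtain y a' b' where vv: "v = DV y a' b'" by (cases v) auto
    note inv = mvar_replace_inverse[OF e v, unfolded vv, simplified]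
    from inv(2) consider "y = X2" "l = Suc b'" "a' = 0" | "y = Q i" "b = Suc b'" "a' = a"
      by (auto simp: keys_xxq_monom)
    then show False
      using inv(1) False by cases (simp_all add: xxq_monom_replace_X2 xxq_monom_replace_Q, blast+)
  qed
  then show ?thesis by simp
qed

lemma coeff_pairing_weight_delta1: "coeff_pairing (weight C) (delta1 p) = (0 :: 'a::comm_ring_1)"
  unfolding delta1_def coeff_pairing_dderiv sum_weight_dderiv_monom_shift1 by simp

lemma coeff_pairing_weight_delta2: "coeff_pairing (weight C) (delta2 p) = (0 :: 'a::comm_ring_1)"
  unfolding delta2_def coeff_pairing_dderiv sum_weight_dderiv_monom_shift2 by simp

lemma coeff_pairing_weight_mult_var:
  assumes "\<And>k l a b i. Poly_Mapping.lookup (xxq_monom k l a b i) v = 0"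
  shows "coeff_pairing (weight C) (r * var v) = (0 :: 'a::comm_ring_1)"
proof -
  have "weight C (x + mvar v) = (0 :: 'a)" for x
  proof (rule weight_eq_0, rule notI)
    fix k l a b i assume e: "x + mvar v = xxq_monom k l a b i"
    have "Poly_Mapping.lookup (xxq_monom k l a b i) v \<noteq> 0"
      unfolding e[symmetric] by (simp add: lookup_add lookup_mvar)
    then show False using assms by simp
  qed
  then show ?thesis unfolding var_eq_single_mvar coeff_pairing_mult_single by simp
qed

definition guard_monom :: "bool \<Rightarrow> bool \<Rightarrow> dvar \<Rightarrow>\<^sub>0 nat" where
  "guard_monom e s = (if e then mvar (DV X1 0 0) else 0) + (if s then mvar (DV X2 0 0) else 0)"

lemma keys_guard_monom: "Poly_Mapping.keys (guard_monom e s) \<subseteq> {DV X1 0 0, DV X2 0 0}"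
  by (auto simp: guard_monom_def keys_add_nat)

lemma gen_lift_eq_single: "(gen_lift i e s j \<alpha> \<beta> :: 'a::comm_ring_1 dpoly) =
   Poly_Mapping.single (guard_monom e s + mvar (DV (Q i) (if e then 0 else 1) (if s then 0 else 1))) 1 -
   Poly_Mapping.single (guard_monom e s +
     mvar (DV (Q j) (nat ((if e then 0 else 1) + \<alpha>)) (nat ((if s then 0 else 1) + \<beta>)))) 1"
proof -
  have "(var v :: 'a dpoly) ^ (if e then 1 else 0) = Poly_Mapping.single (if e then mvar v else 0) 1" for v e
    by (simp add: var_eq_single_mvar)
  then show ?thesis
    unfolding gen_lift_def by (simp add: var_eq_single_mvar mult_single guard_monom_def)
qed

lemma weight_add_mvar_Q:
  assumes "\<And>k l. x \<noteq> mvar (DV X1 k 0) + mvar (DV X2 0 l)"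
  shows "weight C (x + mvar (DV (Q i) a b)) = 0"
proof (rule weight_eq_0, rule notI)
  fix k l a' b' i' assume e: "x + mvar (DV (Q i) a b) = xxq_monom k l a' b' i'"
  have "DV (Q i) a b \<in> Poly_Mapping.keys (xxq_monom k l a' b' i')"
    unfolding e[symmetric] by (simp add: in_keys_iff lookup_add lookup_mvar)
  then have "DV (Q i) a b = DV (Q i') a' b'"
    by (simp add: keys_xxq_monom)
  then have "x + mvar (DV (Q i) a b) = (mvar (DV X1 k 0) + mvar (DV X2 0 l)) + mvar (DV (Q i) a b)"
    using e by (simp add: xxq_monom_def)
  with assms show False by simp
qed

text \<open>A factor \<open>x\<^sub>1\<close> in a monomial \<open>xxq_monom k l a b i\<close> forces \<open>k = 0\<close>, i.e.\ the tape-1 head at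
  cell \<open>0\<close>; without it \<open>a \<ge> 1\<close>. So the two monomials of a generator multiplied by a common
  monomial encode a configuration and its successor under the command, with the same sign.\<close>
lemma weight_gen_lift_monoms:
  assumes wf: "minsky_wf n cmd" and c: "cmd i e s = Some (j, \<alpha>, \<beta>)"
    and C_step: "\<And>c c'. minsky_step cmd c c' \<Longrightarrow> C c = C c'"
  shows "(weight C (x + (guard_monom e s + mvar (DV (Q i) (if e then 0 else 1) (if s then 0 else 1))))
      :: 'a::comm_ring_1) =
    weight C (x + (guard_monom e s +
      mvar (DV (Q j) (nat ((if e then 0 else 1) + \<alpha>)) (nat ((if s then 0 else 1) + \<beta>)))))"
proof (cases "\<exists>k l. x + guard_monom e s = mvar (DV X1 k 0) + mvar (DV X2 0 l)")
  case True
  then obtain k l where kl: "x + guard_monom e s = mvar (DV X1 k 0) + mvar (DV X2 0 l)" by blast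
  have ab: "\<alpha> \<in> {-1, 0, 1}" "\<beta> \<in> {-1, 0, 1}" "e \<longrightarrow> \<alpha> \<ge> 0" "s \<longrightarrow> \<beta> \<ge> 0"
    using wf c unfolding minsky_wf_def by blast+
  have k0: "k = 0" if e
    using arg_cong[OF kl, of "\<lambda>M. Poly_Mapping.lookup M (DV X1 0 0)"] that
    by (simp add: guard_monom_def lookup_add lookup_mvar split: if_splits)
  have l0: "l = 0" if s
    using arg_cong[OF kl, of "\<lambda>M. Poly_Mapping.lookup M (DV X2 0 0)"] that
    by (simp add: guard_monom_def lookup_add lookup_mvar split: if_splits)
  define a0 where "a0 = (if e then 0 else 1 :: nat)"
  define b0 where "b0 = (if s then 0 else 1 :: nat)"
  have "minsky_step cmd (i, a0 + k, b0 + l)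
      (j, nat ((if e then 0 else 1) + \<alpha>) + k, nat ((if s then 0 else 1) + \<beta>) + l)"
    unfolding minsky_step_def using c ab k0 l0 by (auto simp: a0_def b0_def)
  moreover have "x + (guard_monom e s + mvar (DV (Q i) (if e then 0 else 1) (if s then 0 else 1))) =
      xxq_monom k l a0 b0 i"
    by (simp add: add.assoc[symmetric] kl xxq_monom_def a0_def b0_def)
  moreover have "x + (guard_monom e s +
        mvar (DV (Q j) (nat ((if e then 0 else 1) + \<alpha>)) (nat ((if s then 0 else 1) + \<beta>)))) =
      xxq_monom k l (nat ((if e then 0 else 1) + \<alpha>)) (nat ((if s then 0 else 1) + \<beta>)) j"
    by (simp add: add.assoc[symmetric] kl xxq_monom_def)
  ultimately show ?thesis
    using C_step by (simp add: weight_xxq_monom add.commute)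
next
  case False
  then show ?thesis
    by (simp add: add.assoc[symmetric] weight_add_mvar_Q)
qed

lemma coeff_pairing_weight_mult_gen_lift:
  assumes "minsky_wf n cmd" "cmd i e s = Some (j, \<alpha>, \<beta>)" "\<And>c c'. minsky_step cmd c c' \<Longrightarrow> C c = C c'"
  shows "coeff_pairing (weight C) (r * gen_lift i e s j \<alpha> \<beta>) = (0 :: 'a::comm_ring_1)"
proof -
  have weights: "(weight C (x + (guard_monom e s + mvar (DV (Q i) (if e then 0 else 1) (if s then 0 else 1))))
      :: 'a) =
    weight C (x + (guard_monom e s +
      mvar (DV (Q j) (nat ((if e then 0 else 1) + \<alpha>)) (nat ((if s then 0 else 1) + \<beta>)))))" for x
    by (rule weight_gen_lift_monoms[OF assms])
  show ?thesis
    unfolding gen_lift_eq_single right_diff_distrib coeff_pairing_diff coeff_pairing_mult_single weights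
    by simp
qed

lemma carrier_ringA_gen_lift:
  assumes wf: "minsky_wf n cmd" and c: "cmd i e s = Some (j, \<alpha>, \<beta>)"
  shows "gen_lift i e s j \<alpha> \<beta> \<in> carrier (ringA n)"
proof -
  have "i \<le> n" "j \<le> n"
    using wf c unfolding minsky_wf_def by blast+
  then show ?thesis
    unfolding gen_lift_eq_single using keys_guard_monom
    by (intro carrier_ringA_diff carrier_ringA_single)
       (auto simp: keys_add_nat allowed_base_def dest!: keys_guard_monom[THEN subsetD])
qed

section \<open>The annihilator of a linear functional\<close>

definition annihilator :: "nat \<Rightarrow> ('a::comm_ring_1 dpoly \<Rightarrow> 'a) \<Rightarrow> 'a dpoly set" where
  "annihilator n L = {p \<in> carrier (ringA n). \<forall>r\<in>carrier (ringA n). L (r * p) = 0}"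

lemma ideal_annihilator:
  fixes L :: "'a::comm_ring_1 dpoly \<Rightarrow> 'a"
  assumes add: "\<And>p q. L (p + q) = L p + L q"
  shows "ideal (annihilator n L) (ringA n)"
proof -
  interpret A: cring "ringA n :: 'a dpoly ring" by (rule cring_ringA)
  have L_0: "L 0 = 0"
    using add[of 0 0] by simp
  have L_uminus: "L (- p) = - L p" for p
    using add[of p "- p"] L_0 by (simp add: add_eq_0_iff)
  show ?thesis
  proof (rule idealI)
    show "ring (ringA n)" by (rule cring.axioms(1)[OF cring_ringA])
    show "subgroup (annihilator n L) (add_monoid (ringA n))"
    proof (rule subgroup.intro)
      show "annihilator n L \<subseteq> carrier (add_monoid (ringA n))"
        unfolding annihilator_def by auto
      show "x \<otimes>\<^bsub>add_monoid (ringA n)\<^esub> y \<in> annihilator n L"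
        if "x \<in> annihilator n L" "y \<in> annihilator n L" for x y
        using that unfolding annihilator_def by (simp add: carrier_ringA_add distrib_left add)
      show "\<one>\<^bsub>add_monoid (ringA n)\<^esub> \<in> annihilator n L"
        unfolding annihilator_def by (simp add: carrier_ringA_0 L_0)
      show "inv\<^bsub>add_monoid (ringA n)\<^esub> x \<in> annihilator n L" if "x \<in> annihilator n L" for x
        using that a_inv_ringA[of x n] unfolding annihilator_def
        by (simp add: a_inv_def carrier_ringA_uminus L_uminus)
    qed
    show "x \<otimes>\<^bsub>ringA n\<^esub> a \<in> annihilator n L" "a \<otimes>\<^bsub>ringA n\<^esub> x \<in> annihilator n L"
      if "a \<in> annihilator n L" "x \<in> carrier (ringA n)" for a x
      using that unfolding annihilator_def
      by (simp_all add: carrier_ringA_mult mult.assoc[symmetric] mult.commute[of _ x])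
  qed
qed

lemma dderiv_mem_annihilator:
  fixes L :: "'a::comm_ring_1 dpoly \<Rightarrow> 'a"
  assumes add: "\<And>p q. L (p + q) = L p + L q" and L_dderiv: "\<And>p. L (dderiv sh p) = 0"
    and sh: "\<And>v. base_of (sh v) = base_of v" and p: "p \<in> annihilator n L"
  shows "dderiv sh p \<in> annihilator n L"
proof -
  have L_diff: "L (x - y) = L x - L y" for x y
    using add[of "x - y" y] by (simp add: algebra_simps)
  have "L (r * dderiv sh p) = 0" if r: "r \<in> carrier (ringA n)" for r
  proof -
    have "r * dderiv sh p = dderiv sh (r * p) - dderiv sh r * p"
      by (simp add: dderiv_mult)
    then show ?thesis
      using p carrier_ringA_dderiv[OF sh r] unfolding annihilator_def by (simp add: L_diff L_dderiv)
  qed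
  then show ?thesis
    using p carrier_ringA_dderiv[OF sh] unfolding annihilator_def by blast
qed

lemma is_diff_ideal_annihilator:
  fixes L :: "'a::comm_ring_1 dpoly \<Rightarrow> 'a"
  assumes "\<And>p q. L (p + q) = L p + L q" "\<And>p. L (delta1 p) = 0" "\<And>p. L (delta2 p) = 0"
  shows "is_diff_ideal (ringA n) delta1 delta2 (annihilator n L)"
  unfolding is_diff_ideal_def
proof (intro conjI ballI)
  show "ideal (annihilator n L) (ringA n)"
    using assms(1) by (rule ideal_annihilator)
  have L_shift1: "L (dderiv shift1 q) = 0" and L_shift2: "L (dderiv shift2 q) = 0" for q
    using assms(2,3) by (simp_all add: delta1_def delta2_def)
  show "delta1 p \<in> annihilator n L" "delta2 p \<in> annihilator n L" if "p \<in> annihilator n L" for p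
    unfolding delta1_def delta2_def
    using dderiv_mem_annihilator[OF assms(1) L_shift1 base_of_shift(1) that]
      dderiv_mem_annihilator[OF assms(1) L_shift2 base_of_shift(2) that] .
qed

lemma is_diff_ideal_annihilator_weight:
  "is_diff_ideal (ringA n) delta1 delta2 (annihilator n (coeff_pairing (weight C) :: 'a::comm_ring_1 dpoly \<Rightarrow> 'a))"
  by (rule is_diff_ideal_annihilator)
     (simp_all add: coeff_pairing_add coeff_pairing_weight_delta1 coeff_pairing_weight_delta2)

lemma delta_var_mem_annihilator_weight:
  "delta1 (var (DV X2 0 0)) \<in> annihilator n (coeff_pairing (weight C) :: 'a::comm_ring_1 dpoly \<Rightarrow> 'a)"
  "delta2 (var (DV X1 0 0)) \<in> annihilator n (coeff_pairing (weight C) :: 'a::comm_ring_1 dpoly \<Rightarrow> 'a)"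
  unfolding annihilator_def delta1_def delta2_def dderiv_var
  by (auto intro!: carrier_ringA_var coeff_pairing_weight_mult_var simp: allowed_base_def lookup_xxq_monom)

lemma gen_lift_mem_annihilator_weight:
  assumes "minsky_wf n cmd" "cmd i e s = Some (j, \<alpha>, \<beta>)" "\<And>c c'. minsky_step cmd c c' \<Longrightarrow> C c = C c'"
  shows "gen_lift i e s j \<alpha> \<beta> \<in> annihilator n (coeff_pairing (weight C) :: 'a::comm_ring_1 dpoly \<Rightarrow> 'a)"
  unfolding annihilator_def
  using carrier_ringA_gen_lift[OF assms(1,2)] coeff_pairing_weight_mult_gen_lift[where C = C, OF assms] by blast

lemma g_elem_eq_projB:
  "g_elem n m = projB n (Poly_Mapping.single (xxq_monom 0 0 (2 ^ 2 ^ m) 0 1) 1 -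
    Poly_Mapping.single (xxq_monom 0 0 1 0 0) (1 :: 'a::comm_ring_1))"
  by (simp add: g_elem_def var_eq_single_mvar mult_single xxq_monom_def)

theorem lemma7:
  fixes n :: nat and cmd :: minsky and S :: "nat set" and m :: nat
  assumes nontriv: "(1::'a::comm_ring_1) \<noteq> 0"
    and n1: "1 \<le> n"
    and wf: "minsky_wf n cmd"
    and acyc: "minsky_acyclic cmd"
    and inS: "\<And>x. x \<in> S \<Longrightarrow> (minsky_step cmd)\<^sup>*\<^sup>* (1, 2 ^ 2 ^ x, 0) (0, 1, 0)"
    and notS: "\<And>x. x \<notin> S \<Longrightarrow> minsky_runs_forever cmd (1, 2 ^ 2 ^ x, 0)"
    and mem: "(g_elem n m :: 'a dpoly set) \<in> Itilde n cmd"
  shows "m \<in> S"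
proof (rule ccontr)
  assume "m \<notin> S"
  define C where "C = equivclp (minsky_step cmd) (1, 2 ^ 2 ^ m, 0)"
  have C_step: "C c = C c'" if "minsky_step cmd c c'" for c c'
    unfolding C_def using that by (meson equivclp_into_equivclp)
  have C_terminal: "\<not> C (0, 1, 0)"
    unfolding C_def by (rule not_equivclp_terminal[OF wf notS[OF \<open>m \<notin> S\<close>]])
  let ?L = "coeff_pairing (weight C) :: 'a dpoly \<Rightarrow> 'a"
  let ?g = "Poly_Mapping.single (xxq_monom 0 0 (2 ^ 2 ^ m) 0 1) 1 -
    Poly_Mapping.single (xxq_monom 0 0 1 0 0) (1 :: 'a)"
  have "?g \<in> carrier (ringA n)"
    using n1 by (intro carrier_ringA_diff carrier_ringA_single) (auto simp: keys_xxq_monom allowed_base_def)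
  then have "?g \<in> annihilator n ?L"
    using mem_of_projB_mem_Itilde[OF is_diff_ideal_annihilator_weight delta_var_mem_annihilator_weight
        gen_lift_mem_annihilator_weight[where C = C, OF wf _ C_step]] mem
    unfolding g_elem_eq_projB by blast
  then have "?L (1 * ?g) = 0"
    unfolding annihilator_def using carrier_ringA_1 by blast
  moreover have "?L (1 * ?g) = 1"
    using C_terminal by (simp add: coeff_pairing_diff coeff_pairing_single weight_xxq_monom C_def)
  ultimately show False
    using nontriv by simp
qed

end
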